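(* Let $S$ be a finite poset whose Hasse graph $\Gamma(S)$ is the path $A_n$. Suppose $S$ contains a subposet $W$ isomorphic to $W^{k,k+1}$ ($k\ge1$) with $s_1^+,s_{k+1}^+\notin S^\times$, or a subposet $W$ isomorphic to $W^{k+1,k}$ with $s_1^-,s_{k+1}^-\notin S^\times$. Then $C(f_S)\ne\varnothing$.
   Context: $f_S(x)=\sum_i x_i^2+\sum_{s_i<s_j}x_ix_j$. $H_n=\{x:\sum x_i=0\}$; $C(f)$ is the set of $h\in H_n\setminus\{0\}$ with either all $\partial f/\partial x_i(h)\le0$ or all $\ge0$. $\Gamma(S)$: vertices $S$, edge between $s,s'$ when one covers the other. $W^{k,k+1}=\{s_1^-,\dots,s_k^-,s_1^+,\dots,s_{k+1}^+\}$ with only strict relations $s_i^-<s_i^+$, $s_i^-<s_{i+1}^+$ ($1\le i\le k$); $W^{k+1,k}=\{s_1^-,\dots,s_{k+1}^-,s_1^+,\dots,s_k^+\}$ with only strict relations $s_i^+>s_i^-$, $s_i^+>s_{i+1}^-$ ($1\le i\le k$). $S^\times$ is the set of junction points of $S$: elements covering at least two elements of $S$ or covered by at least two elements of $S$. *)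

theory Defs
  imports "HOL-Analysis.Analysis"
begin

text \<open>A finite poset is modelled as a finite subset S of a type with a partial order;
  vectors indexed by S are functions 'a \<Rightarrow> real vanishing outside S.\<close>

definition fS :: "'a::order set \<Rightarrow> ('a \<Rightarrow> real) \<Rightarrow> real" where
  "fS S x = (\<Sum>s\<in>S. (x s)^2) + (\<Sum>(s,t)\<in>{(s,t). s \<in> S \<and> t \<in> S \<and> s < t}. x s * x t)"

definition partial_fS :: "'a::order set \<Rightarrow> 'a \<Rightarrow> ('a \<Rightarrow> real) \<Rightarrow> real" where
  "partial_fS S s x = deriv (\<lambda>t. fS S (x(s := t))) (x s)"

definition Cset :: "'a::order set \<Rightarrow> ('a \<Rightarrow> real) set" where
  "Cset S = {h. (\<forall>s. s \<notin> S \<longrightarrow> h s = 0) \<and> (\<Sum>s\<in>S. h s) = 0 \<and> (\<exists>s\<in>S. h s \<noteq> 0) \<and>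
      ((\<forall>s\<in>S. partial_fS S s h \<le> 0) \<or> (\<forall>s\<in>S. partial_fS S s h \<ge> 0))}"

definition covers :: "'a::order set \<Rightarrow> 'a \<Rightarrow> 'a \<Rightarrow> bool" where
  "covers S a b \<longleftrightarrow> a \<in> S \<and> b \<in> S \<and> b < a \<and> \<not> (\<exists>u\<in>S. b < u \<and> u < a)"

definition hasse_edge :: "'a::order set \<Rightarrow> 'a \<Rightarrow> 'a \<Rightarrow> bool" where
  "hasse_edge S a b \<longleftrightarrow> covers S a b \<or> covers S b a"

definition hasse_is_path :: "'a::order set \<Rightarrow> nat \<Rightarrow> bool" where
  "hasse_is_path S n \<longleftrightarrow> (\<exists>p. bij_betw p {0..<n} S \<and>
      (\<forall>i<n. \<forall>j<n. hasse_edge S (p i) (p j) \<longleftrightarrow> (i = j + 1 \<or> j = i + 1)))"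

definition junction :: "'a::order set \<Rightarrow> 'a \<Rightarrow> bool" where
  "junction S s \<longleftrightarrow> s \<in> S \<and> (card {t\<in>S. covers S s t} \<ge> 2 \<or> card {t\<in>S. covers S t s} \<ge> 2)"

text \<open>Embedding of W as an induced subposet of S: minus elements m 1..m a,
  plus elements p 1..p b, all distinct, and the only strict relations among them
  are m i < p j for (i,j) with rel i j.\<close>
definition induced_bipartite ::
  "'a::order set \<Rightarrow> nat \<Rightarrow> nat \<Rightarrow> (nat \<Rightarrow> nat \<Rightarrow> bool) \<Rightarrow> (nat \<Rightarrow> 'a) \<Rightarrow> (nat \<Rightarrow> 'a) \<Rightarrow> bool" where
  "induced_bipartite S a b rel m p \<longleftrightarrow>
     m ` {1..a} \<subseteq> S \<and> p ` {1..b} \<subseteq> S \<and>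
     inj_on m {1..a} \<and> inj_on p {1..b} \<and> m ` {1..a} \<inter> p ` {1..b} = {} \<and>
     (\<forall>i\<in>{1..a}. \<forall>j\<in>{1..a}. \<not> m i < m j) \<and>
     (\<forall>i\<in>{1..b}. \<forall>j\<in>{1..b}. \<not> p i < p j) \<and>
     (\<forall>i\<in>{1..a}. \<forall>j\<in>{1..b}. \<not> p j < m i \<and> (m i < p j \<longleftrightarrow> rel i j))"

definition is_W_k_k1 :: "'a::order set \<Rightarrow> nat \<Rightarrow> (nat \<Rightarrow> 'a) \<Rightarrow> (nat \<Rightarrow> 'a) \<Rightarrow> bool" where
  "is_W_k_k1 S k m p \<longleftrightarrow> induced_bipartite S k (k+1) (\<lambda>i j. j = i \<or> j = i + 1) m p"

text \<open>W^{k+1,k}: s_i^+ > s_i^-, s_i^+ > s_{i+1}^- (1 \<le> i \<le> k).\<close>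
definition is_W_k1_k :: "'a::order set \<Rightarrow> nat \<Rightarrow> (nat \<Rightarrow> 'a) \<Rightarrow> (nat \<Rightarrow> 'a) \<Rightarrow> bool" where
  "is_W_k1_k S k m p \<longleftrightarrow> induced_bipartite S (k+1) k (\<lambda>j i. j = i \<or> j = i + 1) m p"

end

theory Submission
  imports Defs
begin

text \<open>
  Number the elements of S along the Hasse path as q 0, ..., q (n - 1); step l, from q l to
  q (l + 1), goes either up or down, and two elements are comparable exactly when all steps
  between them go the same way. For positions a < b let \<sigma> l = \<plusminus>1 be the direction of step l
  when a \<le> l < b and \<sigma> l = 0 otherwise, and put h j = \<sigma> (j - 1) - \<sigma> j. Then h sums to 0, and
  the partial derivative 2 h l + \<Sum> {h j | q j comparable to q l} telescopes, because the
  comparable positions fill the maximal monotone runs ending and starting at l, to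
  \<sigma> (L - 1) + \<sigma> (l - 1) - \<sigma> l - \<sigma> R for the steps L - 1 and R just outside these runs.
  If the path descends through a and ascends through b, all these values are \<le> 0, so h \<in> C(f_S).

  The subposet W is a zigzag, and the positions of a zigzag along a path are monotone. Its end
  points are not junctions, so the path passes through each of them monotonically, in the
  direction it takes from the end point's neighbour in W to the end point; the two ends give
  a and b (with all directions reversed when the ends of W are minimal).
\<close>

lemma sum_strict_pairs_fst:
  fixes S :: "'a::order set" and g :: "'a \<Rightarrow> real"
  assumes "finite S" "s \<in> S"
  shows "(\<Sum>z\<in>{(a,b). a \<in> S \<and> b \<in> S \<and> a < b}. if fst z = s then g (snd z) else 0)
       = (\<Sum>b\<in>{b\<in>S. s < b}. g b)"
proof -
  let ?P = "{(a,b). a \<in> S \<and> b \<in> S \<and> a < b}"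
  have "finite ?P" by (rule finite_subset[of _ "S \<times> S"]) (use assms in auto)
  then have "(\<Sum>z\<in>?P. if fst z = s then g (snd z) else 0) = (\<Sum>z\<in>{z\<in>?P. fst z = s}. g (snd z))"
    by (rule sum.inter_filter[symmetric])
  also have "{z\<in>?P. fst z = s} = Pair s ` {b\<in>S. s < b}" using assms(2) by auto
  also have "(\<Sum>z\<in>Pair s ` {b\<in>S. s < b}. g (snd z)) = (\<Sum>b\<in>{b\<in>S. s < b}. g b)"
    by (subst sum.reindex) (auto simp: inj_on_def)
  finally show ?thesis .
qed

lemma sum_strict_pairs_snd:
  fixes S :: "'a::order set" and g :: "'a \<Rightarrow> real"
  assumes "finite S" "s \<in> S"
  shows "(\<Sum>z\<in>{(a,b). a \<in> S \<and> b \<in> S \<and> a < b}. if snd z = s then g (fst z) else 0)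
       = (\<Sum>a\<in>{a\<in>S. a < s}. g a)"
proof -
  let ?P = "{(a,b). a \<in> S \<and> b \<in> S \<and> a < b}"
  have "finite ?P" by (rule finite_subset[of _ "S \<times> S"]) (use assms in auto)
  then have "(\<Sum>z\<in>?P. if snd z = s then g (fst z) else 0) = (\<Sum>z\<in>{z\<in>?P. snd z = s}. g (fst z))"
    by (rule sum.inter_filter[symmetric])
  also have "{z\<in>?P. snd z = s} = (\<lambda>a. (a, s)) ` {a\<in>S. a < s}" using assms(2) by auto
  also have "(\<Sum>z\<in>(\<lambda>a. (a, s)) ` {a\<in>S. a < s}. g (fst z)) = (\<Sum>a\<in>{a\<in>S. a < s}. g a)"
    by (simp add: sum.reindex inj_on_def)
  finally show ?thesis .
qed

lemma fS_fun_upd: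
  fixes S :: "'a::order set"
  assumes "finite S" "s \<in> S"
  shows "fS S (x(s := t)) = fS S x + (t\<^sup>2 - (x s)\<^sup>2) +
    (t - x s) * ((\<Sum>b\<in>{b\<in>S. s < b}. x b) + (\<Sum>a\<in>{a\<in>S. a < s}. x a))"
proof -
  let ?P = "{(a,b). a \<in> S \<and> b \<in> S \<and> a < b}"
  have squares: "(\<Sum>r\<in>S. ((x(s := t)) r)\<^sup>2) = (\<Sum>r\<in>S. (x r)\<^sup>2) + (t\<^sup>2 - (x s)\<^sup>2)"
  proof -
    have "(\<Sum>r\<in>S. ((x(s := t)) r)\<^sup>2) = (\<Sum>r\<in>S. (x r)\<^sup>2 + (if r = s then t\<^sup>2 - (x s)\<^sup>2 else 0))"
      by (rule sum.cong) auto
    then show ?thesis using assms by (simp add: sum.distrib)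
  qed
  have "(\<Sum>(a,b)\<in>?P. (x(s := t)) a * (x(s := t)) b) =
     (\<Sum>z\<in>?P. x (fst z) * x (snd z) + (t - x s) * (if fst z = s then x (snd z) else 0)
        + (t - x s) * (if snd z = s then x (fst z) else 0))"
    by (rule sum.cong) (auto simp: algebra_simps)
  also have "\<dots> = (\<Sum>(a,b)\<in>?P. x a * x b) + (t - x s) *
      ((\<Sum>z\<in>?P. if fst z = s then x (snd z) else 0) + (\<Sum>z\<in>?P. if snd z = s then x (fst z) else 0))"
    by (simp add: sum.distrib sum_distrib_left distrib_left case_prod_beta)
  finally show ?thesis
    unfolding fS_def squares sum_strict_pairs_fst[OF assms] sum_strict_pairs_snd[OF assms]
    by simp
qed

lemma partial_fS_eq:
  fixes S :: "'a::order set"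
  assumes "finite S" "s \<in> S"
  shows "partial_fS S s x = 2 * x s + ((\<Sum>b\<in>{b\<in>S. s < b}. x b) + (\<Sum>a\<in>{a\<in>S. a < s}. x a))"
proof -
  define c where "c = (\<Sum>b\<in>{b\<in>S. s < b}. x b) + (\<Sum>a\<in>{a\<in>S. a < s}. x a)"
  have "((\<lambda>t. fS S x + (t\<^sup>2 - (x s)\<^sup>2) + (t - x s) * c) has_real_derivative 2 * x s + c) (at (x s))"
    by (auto intro!: derivative_eq_intros)
  then have "((\<lambda>t. fS S (x(s := t))) has_real_derivative 2 * x s + c) (at (x s))"
    by (simp add: fS_fun_upd[OF assms] c_def)
  then show ?thesis unfolding partial_fS_def c_def by (rule DERIV_imp_deriv)
qed

definition constant_run :: "(nat \<Rightarrow> bool) \<Rightarrow> nat \<Rightarrow> nat \<Rightarrow> bool" where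
  "constant_run u i j \<longleftrightarrow> (\<forall>l\<in>{i..<j}. u l) \<or> (\<forall>l\<in>{i..<j}. \<not> u l)"

definition run_comparable :: "(nat \<Rightarrow> bool) \<Rightarrow> nat \<Rightarrow> nat \<Rightarrow> bool" where
  "run_comparable u i j \<longleftrightarrow> i \<noteq> j \<and> constant_run u (min i j) (max i j)"

definition upward_walk :: "(nat \<Rightarrow> bool) \<Rightarrow> nat \<Rightarrow> nat \<Rightarrow> bool" where
  "upward_walk u i j \<longleftrightarrow> (i < j \<and> (\<forall>l\<in>{i..<j}. u l)) \<or> (j < i \<and> (\<forall>l\<in>{j..<i}. \<not> u l))"

lemma constant_run_subset: "constant_run u i j \<Longrightarrow> i \<le> i' \<Longrightarrow> j' \<le> j \<Longrightarrow> constant_run u i' j'"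
  unfolding constant_run_def by auto

lemma constant_run_short: "j \<le> Suc i \<Longrightarrow> constant_run u i j"
  unfolding constant_run_def by (cases "u i") (auto simp: le_Suc_eq)

lemma run_comparable_Not: "run_comparable (\<lambda>l. \<not> u l) i j = run_comparable u i j"
  unfolding run_comparable_def constant_run_def by auto

lemma run_comparable_iff_upward_walk:
  "run_comparable u i j \<longleftrightarrow> upward_walk u i j \<or> upward_walk u j i"
  unfolding run_comparable_def constant_run_def upward_walk_def
  by (cases i j rule: linorder_cases) (auto simp: min_def max_def)

lemma upward_walk_trans: "upward_walk u i t \<Longrightarrow> upward_walk u t j \<Longrightarrow> upward_walk u i j"
  unfolding upward_walk_def
  by (cases i t rule: linorder_cases; cases t j rule: linorder_cases) auto

lemma run_comparable_between:
  assumes "run_comparable u i j" "run_comparable u j l" "\<not> run_comparable u i l" "i \<noteq> l"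
  shows "i < j \<and> j < l \<or> l < j \<and> j < i"
proof (rule ccontr)
  assume "\<not> ?thesis"
  with assms(1,2) have "j < min i l \<or> max i l < j" unfolding run_comparable_def by auto
  then have "constant_run u (min i l) (max i l)"
  proof
    assume "j < min i l"
    then have "constant_run u j (max i l)"
      using assms(1,2) unfolding run_comparable_def constant_run_def
      by (cases "u j") (auto simp: min_def max_def split: if_splits)
    then show ?thesis by (rule constant_run_subset) (use \<open>j < min i l\<close> in auto)
  next
    assume "max i l < j"
    then have "constant_run u (min i l) j"
      using assms(1,2) unfolding run_comparable_def constant_run_def
      by (cases "u (j - 1)") (auto simp: min_def max_def split: if_splits)
    then show ?thesis by (rule constant_run_subset) (use \<open>max i l < j\<close> in auto)
  qed
  with assms(3,4) show False unfolding run_comparable_def by simp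
qed

definition out_sign :: "(nat \<Rightarrow> bool) \<Rightarrow> nat \<Rightarrow> nat \<Rightarrow> nat \<Rightarrow> real" where
  "out_sign u a b j = (if j \<in> {a..<b} then (if u j then 1 else -1) else 0)"

definition in_sign :: "(nat \<Rightarrow> bool) \<Rightarrow> nat \<Rightarrow> nat \<Rightarrow> nat \<Rightarrow> real" where
  "in_sign u a b j = (case j of 0 \<Rightarrow> 0 | Suc i \<Rightarrow> out_sign u a b i)"

definition witness :: "(nat \<Rightarrow> bool) \<Rightarrow> nat \<Rightarrow> nat \<Rightarrow> nat \<Rightarrow> real" where
  "witness u a b j = in_sign u a b j - out_sign u a b j"

lemma in_sign_Suc [simp]: "in_sign u a b (Suc j) = out_sign u a b j"
  by (simp add: in_sign_def)

lemma sum_witness_atLeastLessThan: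
  "i \<le> j \<Longrightarrow> (\<Sum>x\<in>{i..<j}. witness u a b x) = in_sign u a b i - in_sign u a b j"
  by (induction j rule: dec_induct) (simp_all add: witness_def)

text \<open>Here u l is the direction of the step from position l to l + 1; at the ends of the path
  only the existing steps are constrained.\<close>

definition fall_rise :: "(nat \<Rightarrow> bool) \<Rightarrow> nat \<Rightarrow> nat \<Rightarrow> nat \<Rightarrow> bool" where
  "fall_rise u n a b \<longleftrightarrow> a < b \<and> b < n \<and> \<not> u a \<and> (0 < a \<longrightarrow> \<not> u (a - 1)) \<and>
     u (b - 1) \<and> (b + 1 < n \<longrightarrow> u b)"

lemma maximal_run_before:
  obtains L where "L \<le> l" "\<And>j. j \<le> l \<Longrightarrow> constant_run u j l \<longleftrightarrow> L \<le> j"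
proof
  define L where "L = (LEAST j. constant_run u j l)"
  have "constant_run u L l" unfolding L_def by (rule LeastI[of _ l]) (simp add: constant_run_short)
  then show "constant_run u j l \<longleftrightarrow> L \<le> j" if "j \<le> l" for j
    using constant_run_subset not_less_Least[of j] unfolding L_def by (metis order_refl not_le)
  show "L \<le> l" unfolding L_def by (rule Least_le) (simp add: constant_run_short)
qed

lemma maximal_run_after:
  assumes "l < n"
  obtains R where "l \<le> R" "R < n" "\<And>j. l \<le> j \<Longrightarrow> j < n \<Longrightarrow> constant_run u l j \<longleftrightarrow> j \<le> R"
proof
  define R where "R = (GREATEST j. j < n \<and> constant_run u l j)"
  have R: "R < n \<and> constant_run u l R" unfolding R_def
    by (rule GreatestI_nat[of _ l n]) (use assms in \<open>auto simp: constant_run_short\<close>)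
  have max: "j \<le> R" if "j < n" "constant_run u l j" for j
    unfolding R_def by (rule Greatest_le_nat[of _ _ n]) (use that in auto)
  show "R < n" using R by simp
  show "l \<le> R" using max[of l] assms by (simp add: constant_run_short)
  show "constant_run u l j \<longleftrightarrow> j \<le> R" if "l \<le> j" "j < n" for j
    using max[of j] R constant_run_subset[of u l R l j] that by auto
qed

lemma out_sign_add_nonneg:
  assumes ends: "fall_rise u n a b" and "x \<le> y" and run: "\<And>l. l \<in> {x..<y} \<Longrightarrow> u l = u x"
    and step: "y \<in> {a..<b} \<Longrightarrow> x < y \<and> u y \<noteq> u x"
  shows "0 \<le> out_sign u a b x + out_sign u a b y"
proof (cases "y \<in> {a..<b}")
  case y: True
  with step have "x < y" "u y \<noteq> u x" by auto
  show ?thesis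
  proof (cases "x \<in> {a..<b}")
    case True
    with y \<open>u y \<noteq> u x\<close> show ?thesis by (auto simp: out_sign_def)
  next
    case False
    with y \<open>x < y\<close> have "x < a" by auto
    have "\<not> u x"
    proof (cases "a < y")
      case True
      with \<open>x < a\<close> have "u a = u x" by (intro run) simp
      with ends show ?thesis by (simp add: fall_rise_def)
    next
      case False
      with y have "a = y" by simp
      with \<open>x < a\<close> have "u (a - 1) = u x" by (intro run) simp
      with ends \<open>x < a\<close> show ?thesis by (simp add: fall_rise_def)
    qed
    with \<open>u y \<noteq> u x\<close> y False show ?thesis by (simp add: out_sign_def)
  qed
next
  case False
  have "u x" if "x \<in> {a..<b}"
  proof -
    from that False \<open>x \<le> y\<close> have "u (b - 1) = u x" by (intro run) auto
    with ends show ?thesis by (simp add: fall_rise_def)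
  qed
  with False show ?thesis by (auto simp: out_sign_def)
qed

lemma out_sign_run_end:
  assumes ends: "fall_rise u n a b" and "l \<le> R" "R < n"
    and run: "\<And>j. l \<le> j \<Longrightarrow> j < n \<Longrightarrow> constant_run u l j \<longleftrightarrow> j \<le> R"
  shows "0 \<le> out_sign u a b l + out_sign u a b R"
proof (rule out_sign_add_nonneg[OF ends \<open>l \<le> R\<close>])
  have "constant_run u l R" using run \<open>l \<le> R\<close> \<open>R < n\<close> by simp
  then show "u x = u l" if "x \<in> {l..<R}" for x
    using that unfolding constant_run_def by auto
  show "l < R \<and> u R \<noteq> u l" if "R \<in> {a..<b}"
  proof -
    from that ends have "Suc R < n" by (auto simp: fall_rise_def)
    then have "\<not> constant_run u l (Suc R)" using run[of "Suc R"] \<open>l \<le> R\<close> by simp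
    with \<open>constant_run u l R\<close> \<open>l \<le> R\<close> show ?thesis
      unfolding constant_run_def by (auto simp: less_Suc_eq le_less)
  qed
qed

lemma out_sign_add_nonpos:
  assumes ends: "fall_rise u n a b" and "x < y" "Suc y < n"
    and run: "\<And>l. l \<in> {Suc x..y} \<Longrightarrow> u l = u y" and step: "u x \<noteq> u y"
  shows "out_sign u a b x + out_sign u a b y \<le> 0"
proof (cases "x \<in> {a..<b}")
  case x: True
  show ?thesis
  proof (cases "y \<in> {a..<b}")
    case True
    with x step show ?thesis by (auto simp: out_sign_def)
  next
    case False
    with x \<open>x < y\<close> have "b \<le> y" by auto
    have "u y"
    proof (cases "Suc x < b")
      case True
      with \<open>b \<le> y\<close> have "u (b - 1) = u y" by (intro run) auto
      with ends show ?thesis by (simp add: fall_rise_def)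
    next
      case False
      with x have "b = Suc x" by auto
      with \<open>b \<le> y\<close> have "u b = u y" by (intro run) auto
      with ends step \<open>b = Suc x\<close> \<open>Suc y < n\<close> \<open>b \<le> y\<close> show ?thesis by (auto simp: fall_rise_def)
    qed
    with step x False show ?thesis by (simp add: out_sign_def)
  qed
next
  case False
  have "\<not> u y" if "y \<in> {a..<b}"
  proof -
    from that False \<open>x < y\<close> have "u a = u y" by (intro run) auto
    with ends show ?thesis by (simp add: fall_rise_def)
  qed
  with False show ?thesis by (auto simp: out_sign_def)
qed

lemma in_sign_run_start:
  assumes ends: "fall_rise u n a b" and "L \<le> l" "l < n"
    and run: "\<And>j. j \<le> l \<Longrightarrow> constant_run u j l \<longleftrightarrow> L \<le> j"
  shows "in_sign u a b L + in_sign u a b l \<le> 0"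
proof (cases l)
  case 0
  with \<open>L \<le> l\<close> show ?thesis by (simp add: in_sign_def)
next
  case (Suc y)
  have "L \<le> y" using run[of y] Suc by (simp add: constant_run_short)
  have "constant_run u L l" using run \<open>L \<le> l\<close> by simp
  then have same: "u z = u y" if "z \<in> {L..y}" for z
    using that Suc unfolding constant_run_def by auto
  show ?thesis
  proof (cases L)
    case 0
    have "\<not> u y" if "y \<in> {a..<b}"
    proof -
      from that 0 have "u a = u y" by (intro same) auto
      with ends show ?thesis by (simp add: fall_rise_def)
    qed
    with Suc 0 show ?thesis by (auto simp: in_sign_def out_sign_def)
  next
    case (Suc x)
    have "\<not> constant_run u x l" using run[of x] Suc \<open>L \<le> l\<close> by simp
    have "u x \<noteq> u y"
    proof
      assume "u x = u y"
      have "u z = u y" if "z \<in> {x..<l}" for z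
      proof (cases "z = x")
        case True
        with \<open>u x = u y\<close> show ?thesis by simp
      next
        case False
        with that Suc \<open>l = Suc y\<close> show ?thesis by (intro same) auto
      qed
      then have "constant_run u x l" unfolding constant_run_def by blast
      with \<open>\<not> constant_run u x l\<close> show False ..
    qed
    have "out_sign u a b x + out_sign u a b y \<le> 0"
    proof (rule out_sign_add_nonpos[OF ends _ _ _ \<open>u x \<noteq> u y\<close>])
      show "x < y" "Suc y < n" using Suc \<open>L \<le> y\<close> \<open>l < n\<close> \<open>l = Suc y\<close> by auto
      show "u z = u y" if "z \<in> {Suc x..y}" for z using that Suc by (intro same) auto
    qed
    with Suc \<open>l = Suc y\<close> show ?thesis by simp
  qed
qed

lemma witness_comparable_sum_nonpos:
  assumes ends: "fall_rise u n a b" and "l < n"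
  shows "2 * witness u a b l + (\<Sum>j | j < n \<and> run_comparable u l j. witness u a b j) \<le> 0"
proof -
  obtain L where L: "L \<le> l" "\<And>j. j \<le> l \<Longrightarrow> constant_run u j l \<longleftrightarrow> L \<le> j"
    using maximal_run_before by blast
  obtain R where R: "l \<le> R" "R < n" "\<And>j. l \<le> j \<Longrightarrow> j < n \<Longrightarrow> constant_run u l j \<longleftrightarrow> j \<le> R"
    using maximal_run_after[OF \<open>l < n\<close>] by blast
  have "{j. j < n \<and> run_comparable u l j} = {L..<l} \<union> {Suc l..<Suc R}"
  proof (intro set_eqI iffI)
    fix j assume "j \<in> {j. j < n \<and> run_comparable u l j}"
    with L(2)[of j] R(3)[of j] show "j \<in> {L..<l} \<union> {Suc l..<Suc R}"
      by (cases j l rule: linorder_cases) (auto simp: run_comparable_def min_def max_def)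
  next
    fix j assume "j \<in> {L..<l} \<union> {Suc l..<Suc R}"
    with L(2)[of j] R(2) R(3)[of j] show "j \<in> {j. j < n \<and> run_comparable u l j}"
      using \<open>l < n\<close> by (auto simp: run_comparable_def min_def max_def)
  qed
  then have "(\<Sum>j | j < n \<and> run_comparable u l j. witness u a b j)
      = (\<Sum>j\<in>{L..<l}. witness u a b j) + (\<Sum>j\<in>{Suc l..<Suc R}. witness u a b j)"
    by (simp add: sum.union_disjoint)
  also have "\<dots> = (in_sign u a b L - in_sign u a b l) + (out_sign u a b l - out_sign u a b R)"
    using sum_witness_atLeastLessThan[OF L(1)] sum_witness_atLeastLessThan[of "Suc l" "Suc R"] R(1)
    by (metis in_sign_Suc Suc_le_mono)
  finally have "2 * witness u a b l + (\<Sum>j | j < n \<and> run_comparable u l j. witness u a b j)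
      = (in_sign u a b L + in_sign u a b l) - (out_sign u a b l + out_sign u a b R)"
    by (simp add: witness_def)
  also have "\<dots> \<le> 0"
    using in_sign_run_start[OF ends L(1) \<open>l < n\<close> L(2)] out_sign_run_end[OF ends R] by simp
  finally show ?thesis .
qed

definition zigzag :: "'a::order set \<Rightarrow> (nat \<Rightarrow> 'a) \<Rightarrow> nat \<Rightarrow> bool" where
  "zigzag S e K \<longleftrightarrow> (\<forall>t\<le>K. e t \<in> S) \<and> (\<forall>t<K. e t < e (Suc t) \<or> e (Suc t) < e t) \<and>
     (\<forall>t. t + 2 \<le> K \<longrightarrow> e t \<noteq> e (t + 2) \<and> \<not> e t < e (t + 2) \<and> \<not> e (t + 2) < e t)"

lemma same_direction_if_between:
  fixes w :: "nat \<Rightarrow> 'b::linorder"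
  assumes "\<And>t. t + 2 \<le> K \<Longrightarrow>
    w t < w (t + 1) \<and> w (t + 1) < w (t + 2) \<or> w (t + 2) < w (t + 1) \<and> w (t + 1) < w t"
  shows "t < K \<Longrightarrow> w t < w (Suc t) \<longleftrightarrow> w 0 < w 1"
proof (induction t)
  case (Suc t)
  with assms[of t] show ?case by auto
qed simp

lemma zigzag_interleave:
  assumes S: "\<forall>i\<in>{1..k+1}. x i \<in> S" "\<forall>i\<in>{1..k}. y i \<in> S"
    and inj: "inj_on x {1..k+1}" "inj_on y {1..k}"
    and antichain: "\<forall>i\<in>{1..k+1}. \<forall>j\<in>{1..k+1}. \<not> x i < x j" "\<forall>i\<in>{1..k}. \<forall>j\<in>{1..k}. \<not> y i < y j"
    and comparable: "\<forall>i\<in>{1..k}. (x i < y i \<or> y i < x i) \<and> (x (i + 1) < y i \<or> y i < x (i + 1))"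
  shows "zigzag S (\<lambda>t. if even t then x (t div 2 + 1) else y (t div 2 + 1)) (2 * k)"
proof -
  define e where "e t = (if even t then x (t div 2 + 1) else y (t div 2 + 1))" for t
  have parity: thesis if "\<And>i. t = 2 * i \<Longrightarrow> thesis" "\<And>i. t = 2 * i + 1 \<Longrightarrow> thesis" for t :: nat and thesis
    using that by (metis evenE oddE)
  have "e t \<in> S" if "t \<le> 2 * k" for t
    by (rule parity[of t]) (use that S in \<open>auto simp: e_def\<close>)
  moreover have "e t < e (Suc t) \<or> e (Suc t) < e t" if "t < 2 * k" for t
  proof (rule parity[of t])
    fix i assume "t = 2 * i"
    then have "e t = x (i + 1)" "e (Suc t) = y (i + 1)" by (simp_all add: e_def)
    with that \<open>t = 2 * i\<close> comparable show ?thesis by auto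
  next
    fix i assume "t = 2 * i + 1"
    then have "e t = y (i + 1)" "e (Suc t) = x (i + 2)" by (simp_all add: e_def)
    with that \<open>t = 2 * i + 1\<close> comparable show ?thesis by auto
  qed
  moreover have "e t \<noteq> e (t + 2) \<and> \<not> e t < e (t + 2) \<and> \<not> e (t + 2) < e t" if "t + 2 \<le> 2 * k" for t
  proof (rule parity[of t])
    fix i assume "t = 2 * i"
    then have "e t = x (i + 1)" "e (t + 2) = x (i + 2)" by (simp_all add: e_def)
    with that \<open>t = 2 * i\<close> antichain(1) inj(1) show ?thesis by (auto dest: inj_onD)
  next
    fix i assume "t = 2 * i + 1"
    then have "e t = y (i + 1)" "e (t + 2) = y (i + 2)" by (simp_all add: e_def)
    with that \<open>t = 2 * i + 1\<close> antichain(2) inj(2) show ?thesis by (auto dest: inj_onD)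
  qed
  ultimately show ?thesis unfolding zigzag_def e_def[symmetric] by blast
qed

lemma zigzag_of_W_k_k1:
  assumes "is_W_k_k1 S k m p"
  shows "zigzag S (\<lambda>t. if even t then p (t div 2 + 1) else m (t div 2 + 1)) (2 * k)"
  using assms unfolding is_W_k_k1_def induced_bipartite_def
  by (intro zigzag_interleave) auto

lemma zigzag_of_W_k1_k:
  assumes "is_W_k1_k S k m p"
  shows "zigzag S (\<lambda>t. if even t then m (t div 2 + 1) else p (t div 2 + 1)) (2 * k)"
  using assms unfolding is_W_k1_k_def induced_bipartite_def
  by (intro zigzag_interleave) auto

lemma junctionI_below:
  assumes "finite S" "covers S x y" "covers S x y'" "y \<noteq> y'"
  shows "junction S x"
proof -
  have "card {y, y'} \<le> card {t\<in>S. covers S x t}"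
    by (rule card_mono) (use assms in \<open>auto simp: covers_def\<close>)
  with assms show ?thesis by (simp add: junction_def covers_def)
qed

lemma junctionI_above:
  assumes "finite S" "covers S y x" "covers S y' x" "y \<noteq> y'"
  shows "junction S x"
proof -
  have "card {y, y'} \<le> card {t\<in>S. covers S t x}"
    by (rule card_mono) (use assms in \<open>auto simp: covers_def\<close>)
  with assms show ?thesis by (simp add: junction_def covers_def)
qed

locale hasse_path =
  fixes S :: "'a::order set" and n :: nat and q :: "nat \<Rightarrow> 'a"
  assumes finite_S: "finite S" and bij_q: "bij_betw q {0..<n} S"
    and hasse_edge_q: "\<And>i j. i < n \<Longrightarrow> j < n \<Longrightarrow> hasse_edge S (q i) (q j) \<longleftrightarrow> i = j + 1 \<or> j = i + 1"
begin

definition up :: "nat \<Rightarrow> bool" where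
  "up l \<longleftrightarrow> q l < q (Suc l)"

definition idx :: "'a \<Rightarrow> nat" where
  "idx = the_inv_into {0..<n} q"

lemma q_in_S: "i < n \<Longrightarrow> q i \<in> S"
  using bij_q by (auto simp: bij_betw_def)

lemma q_eq_iff: "i < n \<Longrightarrow> j < n \<Longrightarrow> q i = q j \<longleftrightarrow> i = j"
  using bij_q by (auto simp: bij_betw_def inj_on_def)

lemma idx_q [simp]: "i < n \<Longrightarrow> idx (q i) = i"
  unfolding idx_def using bij_q by (auto simp: bij_betw_def the_inv_into_f_f)

lemma idx_less: "x \<in> S \<Longrightarrow> idx x < n"
  unfolding idx_def using bij_q by (auto simp: bij_betw_def the_inv_into_f_f)

lemma q_idx [simp]: "x \<in> S \<Longrightarrow> q (idx x) = x"
  unfolding idx_def using bij_q by (auto simp: bij_betw_def f_the_inv_into_f)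

lemma covers_step:
  assumes "Suc l < n"
  shows "if up l then covers S (q (Suc l)) (q l) else covers S (q l) (q (Suc l))"
  using hasse_edge_q[of l "Suc l"] assms by (auto simp: up_def hasse_edge_def covers_def)

lemma down_step: "Suc l < n \<Longrightarrow> \<not> up l \<Longrightarrow> q (Suc l) < q l"
  using covers_step[of l] by (simp add: covers_def)

lemma less_of_up_steps: "i < j \<Longrightarrow> j < n \<Longrightarrow> \<forall>l\<in>{i..<j}. up l \<Longrightarrow> q i < q j"
  by (induction i j rule: less_Suc_induct) (auto simp: up_def intro: less_trans)

lemma less_of_down_steps: "i < j \<Longrightarrow> j < n \<Longrightarrow> \<forall>l\<in>{i..<j}. \<not> up l \<Longrightarrow> q j < q i"
  by (induction i j rule: less_Suc_induct) (auto simp: down_step intro: less_trans)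

lemma less_of_upward_walk: "i < n \<Longrightarrow> j < n \<Longrightarrow> upward_walk up i j \<Longrightarrow> q i < q j"
  unfolding upward_walk_def using less_of_up_steps less_of_down_steps by blast

lemma upward_walk_of_less: "i < n \<Longrightarrow> j < n \<Longrightarrow> q i < q j \<Longrightarrow> upward_walk up i j"
proof (induction "card {z\<in>S. q i < z \<and> z < q j}" arbitrary: i j rule: less_induct)
  case less
  show ?case
  proof (cases "\<exists>z\<in>S. q i < z \<and> z < q j")
    case False
    with less.prems have "covers S (q j) (q i)" by (simp add: covers_def q_in_S)
    with less.prems hasse_edge_q[of i j] have "j = Suc i \<or> i = Suc j"
      by (auto simp: hasse_edge_def)
    with less.prems show ?thesis by (auto simp: upward_walk_def up_def)
  next
    case True
    then obtain z where z: "z \<in> S" "q i < z" "z < q j" by blast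
    define t where "t = idx z"
    have t: "t < n" "q t = z" using z(1) by (simp_all add: t_def idx_less)
    have fin: "finite {z\<in>S. q i < z \<and> z < q j}" using finite_S by simp
    have "card {y\<in>S. q i < y \<and> y < q t} < card {z\<in>S. q i < z \<and> z < q j}"
      by (rule psubset_card_mono[OF fin]) (use z t in \<open>auto intro: less_trans\<close>)
    with less.prems t z have "upward_walk up i t" by (intro less.hyps) auto
    moreover have "card {y\<in>S. q t < y \<and> y < q j} < card {z\<in>S. q i < z \<and> z < q j}"
      by (rule psubset_card_mono[OF fin]) (use z t in \<open>auto intro: less_trans\<close>)
    with less.prems t z have "upward_walk up t j" by (intro less.hyps) auto
    ultimately show ?thesis by (rule upward_walk_trans)
  qed
qed

lemma comparable_iff_run_comparable:
  "i < n \<Longrightarrow> j < n \<Longrightarrow> q i < q j \<or> q j < q i \<longleftrightarrow> run_comparable up i j"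
  unfolding run_comparable_iff_upward_walk
  using less_of_upward_walk upward_walk_of_less by blast

lemma up_iff_less:
  assumes "i \<le> l" "l < j" "j < n" "q i < q j \<or> q j < q i"
  shows "up l \<longleftrightarrow> q i < q j"
proof -
  from assms have "upward_walk up i j \<or> upward_walk up j i"
    using upward_walk_of_less by (meson le_less_trans less_trans)
  with assms less_of_upward_walk[of i j] less_of_upward_walk[of j i] show ?thesis
    by (auto simp: upward_walk_def)
qed

lemma up_eq_at_nonjunction:
  assumes "0 < c" "Suc c < n" "\<not> junction S (q c)"
  shows "up (c - 1) = up c"
proof (rule ccontr)
  obtain d where c: "c = Suc d" using assms(1) by (cases c) auto
  assume "up (c - 1) \<noteq> up c"
  have below: "if up d then covers S (q c) (q d) else covers S (q d) (q c)"
    using covers_step[of d] assms c by simp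
  have above: "if up c then covers S (q (Suc c)) (q c) else covers S (q c) (q (Suc c))"
    using covers_step[of c] assms by simp
  have "q d \<noteq> q (Suc c)" using assms c by (simp add: q_eq_iff)
  with below above \<open>up (c - 1) \<noteq> up c\<close> c have "junction S (q c)"
    using junctionI_below[OF finite_S] junctionI_above[OF finite_S] by (auto split: if_splits)
  with assms show False by simp
qed

lemma cset_nonempty_of_fall_rise:
  assumes v: "\<And>i j. run_comparable v i j \<longleftrightarrow> run_comparable up i j" and ends: "fall_rise v n a b"
  shows "Cset S \<noteq> {}"
proof -
  define h where "h s = (if s \<in> S then witness v a b (idx s) else 0)" for s
  have hq: "h (q i) = witness v a b i" if "i < n" for i using that by (simp add: h_def q_in_S)
  have "(\<Sum>s\<in>S. h s) = (\<Sum>i\<in>{0..<n}. witness v a b i)"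
    using sum.reindex_bij_betw[OF bij_q, of h] by (simp add: hq)
  also have "\<dots> = 0"
    using ends
    by (simp add: sum_witness_atLeastLessThan in_sign_def out_sign_def fall_rise_def split: nat.split)
  finally have sum_zero: "(\<Sum>s\<in>S. h s) = 0" .
  have "h (q a) \<noteq> 0"
    using ends by (simp add: hq fall_rise_def witness_def in_sign_def out_sign_def split: nat.split)
  moreover have "partial_fS S s h \<le> 0" if "s \<in> S" for s
  proof -
    define l where "l = idx s"
    have l: "l < n" "q l = s" using that by (simp_all add: l_def idx_less)
    have comparable: "{y\<in>S. s < y} \<union> {y\<in>S. y < s} = q ` {j. j < n \<and> run_comparable v l j}"
    proof (intro set_eqI iffI)
      fix y assume "y \<in> {y\<in>S. s < y} \<union> {y\<in>S. y < s}"
      with l show "y \<in> q ` {j. j < n \<and> run_comparable v l j}"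
        using comparable_iff_run_comparable[of l "idx y"] v idx_less[of y]
        by (auto intro!: image_eqI[of y q "idx y"])
    next
      fix y assume "y \<in> q ` {j. j < n \<and> run_comparable v l j}"
      with l show "y \<in> {y\<in>S. s < y} \<union> {y\<in>S. y < s}"
        using comparable_iff_run_comparable v q_in_S by auto
    qed
    have "(\<Sum>y\<in>{y\<in>S. s < y}. h y) + (\<Sum>y\<in>{y\<in>S. y < s}. h y)
        = (\<Sum>y\<in>{y\<in>S. s < y} \<union> {y\<in>S. y < s}. h y)"
      by (rule sum.union_disjoint[symmetric]) (use finite_S in auto)
    also have "\<dots> = (\<Sum>j | j < n \<and> run_comparable v l j. h (q j))"
      unfolding comparable by (subst sum.reindex) (auto simp: inj_on_def q_eq_iff)
    also have "\<dots> = (\<Sum>j | j < n \<and> run_comparable v l j. witness v a b j)"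
      by (rule sum.cong) (simp_all add: hq)
    finally have "partial_fS S s h
        = 2 * witness v a b l + (\<Sum>j | j < n \<and> run_comparable v l j. witness v a b j)"
      using l hq[of l] by (simp add: partial_fS_eq[OF finite_S that])
    also have "\<dots> \<le> 0" by (rule witness_comparable_sum_nonpos[OF ends l(1)])
    finally show ?thesis .
  qed
  moreover have "q a \<in> S" using ends by (simp add: q_in_S fall_rise_def)
  moreover have "h s = 0" if "s \<notin> S" for s using that by (simp add: h_def)
  ultimately have "h \<in> Cset S" using sum_zero unfolding Cset_def by blast
  then show ?thesis by blast
qed

lemma cset_nonempty_of_ends:
  assumes "a < a'" "a' < n" "b' < b" "b < n" "a < b"
    and "\<not> junction S (q a)" "\<not> junction S (q b)"
    and ends: "q a' < q a \<and> q b' < q b \<or> q a < q a' \<and> q b < q b'"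
  shows "Cset S \<noteq> {}"
proof (rule cset_nonempty_of_fall_rise)
  \<comment> \<open>v is up when the ends are peaks and its negation when they are valleys\<close>
  define v where "v = (\<lambda>l. up l \<longleftrightarrow> q a' < q a)"
  show "run_comparable v i j \<longleftrightarrow> run_comparable up i j" for i j
    by (cases "q a' < q a") (simp_all add: v_def run_comparable_Not)
  have "up a \<longleftrightarrow> q a < q a'" using assms by (intro up_iff_less) auto
  moreover have "up (a - 1) = up a" if "0 < a" using assms that by (intro up_eq_at_nonjunction) auto
  moreover have "up (b - 1) \<longleftrightarrow> q b' < q b" using assms by (intro up_iff_less) auto
  moreover have "up b = up (b - 1)" if "Suc b < n"
    using assms that up_eq_at_nonjunction[of b] by auto
  ultimately show "fall_rise v n a b" using assms by (auto simp: v_def fall_rise_def)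
qed

lemma zigzag_idx_between:
  assumes "zigzag S e K" "t + 2 \<le> K"
  shows "idx (e t) < idx (e (t + 1)) \<and> idx (e (t + 1)) < idx (e (t + 2)) \<or>
    idx (e (t + 2)) < idx (e (t + 1)) \<and> idx (e (t + 1)) < idx (e t)"
proof (rule run_comparable_between)
  have S: "e t \<in> S" "e (t + 1) \<in> S" "e (t + 2) \<in> S" using assms by (simp_all add: zigzag_def)
  have comp: "q (idx x) < q (idx y) \<or> q (idx y) < q (idx x) \<longleftrightarrow> run_comparable up (idx x) (idx y)"
    if "x \<in> S" "y \<in> S" for x y
    using that comparable_iff_run_comparable[of "idx x" "idx y"] by (simp add: idx_less)
  show "run_comparable up (idx (e t)) (idx (e (t + 1)))"
    using assms comp[of "e t" "e (t + 1)"] S by (auto simp: zigzag_def)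
  show "run_comparable up (idx (e (t + 1))) (idx (e (t + 2)))"
    using assms comp[of "e (t + 1)" "e (t + 2)"] S by (auto simp: zigzag_def)
  show "\<not> run_comparable up (idx (e t)) (idx (e (t + 2)))"
    using assms comp[of "e t" "e (t + 2)"] S by (auto simp: zigzag_def)
  show "idx (e t) \<noteq> idx (e (t + 2))"
    using assms S q_idx by (metis zigzag_def)
qed

lemma cset_nonempty_of_zigzag:
  assumes zz: "zigzag S e K" and "0 < K" and "\<not> junction S (e 0)" "\<not> junction S (e K)"
    and ends: "e 1 < e 0 \<and> e (K - 1) < e K \<or> e 0 < e 1 \<and> e K < e (K - 1)"
  shows "Cset S \<noteq> {}"
proof -
  define w where "w t = idx (e t)" for t
  have S: "e t \<in> S" if "t \<le> K" for t using zz that by (simp add: zigzag_def)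
  have w: "w t < n" "q (w t) = e t" if "t \<le> K" for t
    using S[OF that] by (simp_all add: w_def idx_less)
  have "w t < w (t + 1) \<and> w (t + 1) < w (t + 2) \<or> w (t + 2) < w (t + 1) \<and> w (t + 1) < w t"
    if "t + 2 \<le> K" for t
    unfolding w_def using zigzag_idx_between[OF zz that] .
  then have dir: "w t < w (Suc t) \<longleftrightarrow> w 0 < w 1" if "t < K" for t
    using that by (rule same_direction_if_between)
  have step: "w t \<noteq> w (Suc t)" if "t < K" for t
  proof -
    have "e t \<noteq> e (Suc t)" using zz that unfolding zigzag_def by auto
    with w[of t] w[of "Suc t"] that show ?thesis by force
  qed
  have ends_idx: "w 0 < n" "w 1 < n" "w (K - 1) < n" "w K < n"
    "q (w 0) = e 0" "q (w 1) = e 1" "q (w (K - 1)) = e (K - 1)" "q (w K) = e K"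
    using w \<open>0 < K\<close> by simp_all
  consider "w 0 < w 1" | "w 1 < w 0"
    using step[of 0] \<open>0 < K\<close> by (metis One_nat_def linorder_neqE_nat)
  then show ?thesis
  proof cases
    case 1
    have inc: "w t < w (Suc t)" if "t < K" for t using dir[OF that] 1 by blast
    have "w 0 < w K"
      by (rule lift_Suc_mono_less_ivl[where f = w and N = "{0..<K}"]) (use inc \<open>0 < K\<close> in auto)
    moreover have "w (K - 1) < w K" using inc[of "K - 1"] \<open>0 < K\<close> by simp
    ultimately show ?thesis
      using assms(3-) ends_idx 1
      by (intro cset_nonempty_of_ends[of "w 0" "w 1" "w (K - 1)" "w K"]) simp_all
  next
    case 2
    have dec: "w (Suc t) < w t" if "t < K" for t
      using dir[OF that] step[OF that] 2 by (metis linorder_neqE_nat less_asym)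
    have "w K \<le> w 1"
      by (rule lift_Suc_antimono_le_ivl[where f = w and N = "{1..<K}"])
        (use dec \<open>0 < K\<close> in \<open>auto intro: less_imp_le\<close>)
    with 2 have "w K < w 0" by simp
    moreover have "w K < w (K - 1)" using dec[of "K - 1"] \<open>0 < K\<close> by simp
    ultimately show ?thesis
      using assms(3-) ends_idx 2
      by (intro cset_nonempty_of_ends[of "w K" "w (K - 1)" "w 1" "w 0"]) auto
  qed
qed

end

theorem lemma11:
  fixes S :: "'a::order set" and n k :: nat
  assumes "finite S"
    and "hasse_is_path S n"
    and "k \<ge> 1"
    and "(\<exists>m p. is_W_k_k1 S k m p \<and> \<not> junction S (p 1) \<and> \<not> junction S (p (k+1)))
         \<or> (\<exists>m p. is_W_k1_k S k m p \<and> \<not> junction S (m 1) \<and> \<not> junction S (m (k+1)))"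
  shows "Cset S \<noteq> {}"
proof -
  obtain q where "bij_betw q {0..<n} S"
    and "\<forall>i<n. \<forall>j<n. hasse_edge S (q i) (q j) \<longleftrightarrow> (i = j + 1 \<or> j = i + 1)"
    using assms(2) unfolding hasse_is_path_def by blast
  with assms(1) interpret hasse_path S n q by unfold_locales auto
  have end_positions: "even (2 * k)" "\<not> even (2 * k - 1)" "(2 * k - 1) div 2 + 1 = k" using assms(3) by auto
  from assms(4) show ?thesis
  proof (elim disjE exE conjE)
    fix m p assume W: "is_W_k_k1 S k m p" and "\<not> junction S (p 1)" "\<not> junction S (p (k + 1))"
    moreover have "m 1 < p 1" "m k < p (k + 1)"
      using W assms(3) by (auto simp: is_W_k_k1_def induced_bipartite_def)
    ultimately show ?thesis
      using assms(3) end_positions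
      by (intro cset_nonempty_of_zigzag[OF zigzag_of_W_k_k1[OF W]]) simp_all
  next
    fix m p assume W: "is_W_k1_k S k m p" and "\<not> junction S (m 1)" "\<not> junction S (m (k + 1))"
    moreover have "m 1 < p 1" "m (k + 1) < p k"
      using W assms(3) by (auto simp: is_W_k1_k_def induced_bipartite_def)
    ultimately show ?thesis
      using assms(3) end_positions
      by (intro cset_nonempty_of_zigzag[OF zigzag_of_W_k1_k[OF W]]) simp_all
  qed
qed

end
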